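(* In the calculus $\lambda^{RE}$ described in the context: if $e_1\Rrightarrow^* e_1'$, $e_2\Rrightarrow^* e_2'$ and $\delta\vdash e_1'\approx e_2':\tau$, then $\delta\vdash e_1\approx e_2:\tau$.
   Context: Syntax of $\lambda^{RE}$. Basic types $b ::= \mathsf{Bool}\mid\mathsf{Unit}$. Constants $c ::= \mathsf{true}\mid\mathsf{false}\mid\mathsf{unit}\mid (=_b)\mid (=_{(c,b)})$. Expressions $e ::= c\mid x\mid e\ e\mid \lambda x{:}\tau.\,e\mid \mathsf{BEq}_b\ e\ e\ e\mid \mathsf{XEq}_{x:\tau\to\tau}\ e\ e\ e$. Values $v ::= c\mid \lambda x{:}\tau.\,e\mid \mathsf{BEq}_b\ e\ e\ v\mid \mathsf{XEq}_{x:\tau\to\tau}\ e\ e\ v$. Types $\tau ::= \{x{:}b\mid e\}\mid x{:}\tau\to\tau\mid \mathsf{PEq}_{\tau}\{e\}\{e\}$. $e[x:=e']$ is capture-avoiding substitution. Reduction: evaluation contexts $E ::= \bullet\mid E\ e\mid v\ E\mid \mathsf{BEq}_b\ e\ e\ E\mid\mathsf{XEq}_{x:\tau\to\tau}\ e\ e\ E$; $E[e]\to E[e']$ if $e\to e'$; $(\lambda x{:}\tau.\,e)\ v\to e[x:=v]$; $(=_b)\ c_1\to(=_{(c_1,b)})$; $(=_{(c_1,b)})\ c_2\to\mathsf{true}$ if $c_1,c_2$ syntactically equal, else $\to\mathsf{false}$. $\to^*$ is the reflexive–transitive closure. Parallel reduction $e\Rrightarrow e'$, $\tau\Rrightarrow\tau'$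 (inductive): $x\Rrightarrow x$; $c\Rrightarrow c$; $\lambda x{:}\tau.e\Rrightarrow\lambda x{:}\tau'.e'$ if $\tau\Rrightarrow\tau'$, $e\Rrightarrow e'$; $e_1\ e_2\Rrightarrow e_1'\ e_2'$ if $e_i\Rrightarrow e_i'$; $(\lambda x{:}\tau.e)\ v\Rrightarrow e'[x:=v']$ if $e\Rrightarrow e'$, $v\Rrightarrow v'$; $(=_b)\ c_1\Rrightarrow(=_{(c_1,b)})$; $(=_{(c_1,b)})\ c_2\Rrightarrow\mathsf{true}$ if $c_1,c_2$ syntactically equal, $\Rrightarrow\mathsf{false}$ otherwise; $\mathsf{BEq}$ and $\mathsf{XEq}$ terms reduce componentwise (including type annotations); types reduce componentwise ($\{x{:}b\mid r\}\Rrightarrow\{x{:}b\mid r'\}$ if $r\Rrightarrow r'$, etc.). $\Rrightarrow^*$ is the reflexive–transitive closure. Equivalence logical relation. A pending substitution $\delta$ maps variables to pairs of closed values; $\delta_1,\delta_2$ are its component substitutions, and $\delta,(v_1,v_2)/x$ extends it. Value relation $\delta\vdash v_1\approx_{val}v_2:\tau$: for $\{x{:}b\mid r\}$: $v_1=v_2=c$ with $c$ a constant of simple type $b$, $\delta_1(r[x:=c])\to^*\mathsf{true}$ and $\delta_2(r[x:=c])\to^*\mathsf{true}$; for $x{:}\tau_x\to\tau$: for all $v_3,v_4$ with $\delta\vdash v_3\approx_{val}v_4:\tau_x$, $\delta,(v_3,v_4)/x\vdash v_1\ v_3\approx v_2\ v_4:\tau$; for $\mathsf{PEq}_\tau\{e_l\}\{e_r\}$: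 $\delta\vdash\delta_1(e_l)\approx\delta_2(e_r):\tau$. Expression relation: $\delta\vdash e_1\approx e_2:\tau$ iff $e_1\to^*v_1$, $e_2\to^*v_2$ and $\delta\vdash v_1\approx_{val}v_2:\tau$. *)

theory Defs
  imports Main
begin

datatype bty = BBool | BUnit

datatype const =
    CTrue | CFalse | CUnit
  | CEqB bty
  | CEqC const bty

text \<open>Binders:
  Lam tau e binds index 0 in e;
  XEq tx t e1 e2 e3 : annotation x:tx -> t, binding index 0 in t;
  TRef b r : {x:b | r}, binding index 0 in r;
  TFun tx t : x:tx -> t, binding index 0 in t.\<close>

datatype expr =
    Const const
  | Var nat
  | App expr expr
  | Lam ty expr
  | BEq bty expr expr expr
  | XEq ty ty expr expr expr
and ty =
    TRef bty expr
  | TFun ty ty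
  | TPEq ty expr expr

fun liftE :: "nat \<Rightarrow> expr \<Rightarrow> expr"
and liftT :: "nat \<Rightarrow> ty \<Rightarrow> ty" where
  "liftE k (Const c) = Const c"
| "liftE k (Var i) = Var (if i < k then i else Suc i)"
| "liftE k (App a b) = App (liftE k a) (liftE k b)"
| "liftE k (Lam t e) = Lam (liftT k t) (liftE (Suc k) e)"
| "liftE k (BEq b a1 a2 a3) = BEq b (liftE k a1) (liftE k a2) (liftE k a3)"
| "liftE k (XEq tx t a1 a2 a3) =
     XEq (liftT k tx) (liftT (Suc k) t) (liftE k a1) (liftE k a2) (liftE k a3)"
| "liftT k (TRef b r) = TRef b (liftE (Suc k) r)"
| "liftT k (TFun tx t) = TFun (liftT k tx) (liftT (Suc k) t)"
| "liftT k (TPEq t a b) = TPEq (liftT k t) (liftE k a) (liftE k b)"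

fun substE :: "nat \<Rightarrow> expr \<Rightarrow> expr \<Rightarrow> expr"
and substT :: "nat \<Rightarrow> expr \<Rightarrow> ty \<Rightarrow> ty" where
  "substE k s (Const c) = Const c"
| "substE k s (Var i) = (if i < k then Var i else if i = k then s else Var (i - 1))"
| "substE k s (App a b) = App (substE k s a) (substE k s b)"
| "substE k s (Lam t e) = Lam (substT k s t) (substE (Suc k) (liftE 0 s) e)"
| "substE k s (BEq b a1 a2 a3) = BEq b (substE k s a1) (substE k s a2) (substE k s a3)"
| "substE k s (XEq tx t a1 a2 a3) =
     XEq (substT k s tx) (substT (Suc k) (liftE 0 s) t)
         (substE k s a1) (substE k s a2) (substE k s a3)"
| "substT k s (TRef b r) = TRef b (substE (Suc k) (liftE 0 s) r)"
| "substT k s (TFun tx t) = TFun (substT k s tx) (substT (Suc k) (liftE 0 s) t)"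
| "substT k s (TPEq t a b) = TPEq (substT k s t) (substE k s a) (substE k s b)"

text \<open>e[x:=e'] where x is the innermost bound variable (index 0).\<close>
abbreviation subst0 :: "expr \<Rightarrow> expr \<Rightarrow> expr" where
  "subst0 e s \<equiv> substE 0 s e"

fun closedE :: "nat \<Rightarrow> expr \<Rightarrow> bool"
and closedT :: "nat \<Rightarrow> ty \<Rightarrow> bool" where
  "closedE k (Const c) = True"
| "closedE k (Var i) = (i < k)"
| "closedE k (App a b) = (closedE k a \<and> closedE k b)"
| "closedE k (Lam t e) = (closedT k t \<and> closedE (Suc k) e)"
| "closedE k (BEq b a1 a2 a3) = (closedE k a1 \<and> closedE k a2 \<and> closedE k a3)"
| "closedE k (XEq tx t a1 a2 a3) =
     (closedT k tx \<and> closedT (Suc k) t \<and> closedE k a1 \<and> closedE k a2 \<and> closedE k a3)"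
| "closedT k (TRef b r) = closedE (Suc k) r"
| "closedT k (TFun tx t) = (closedT k tx \<and> closedT (Suc k) t)"
| "closedT k (TPEq t a b) = (closedT k t \<and> closedE k a \<and> closedE k b)"

abbreviation closed :: "expr \<Rightarrow> bool" where "closed e \<equiv> closedE 0 e"

inductive is_value :: "expr \<Rightarrow> bool" where
  "is_value (Const c)"
| "is_value (Lam t e)"
| "is_value v \<Longrightarrow> is_value (BEq b a1 a2 v)"
| "is_value v \<Longrightarrow> is_value (XEq tx t a1 a2 v)"

inductive step :: "expr \<Rightarrow> expr \<Rightarrow> bool" where
  st_beta: "is_value v \<Longrightarrow> step (App (Lam t e) v) (subst0 e v)"
| st_eq1: "step (App (Const (CEqB b)) (Const c1)) (Const (CEqC c1 b))"
| st_eq2: "step (App (Const (CEqC c1 b)) (Const c2)) (Const (if c1 = c2 then CTrue else CFalse))"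
| st_app1: "step e e' \<Longrightarrow> step (App e e2) (App e' e2)"
| st_app2: "is_value v \<Longrightarrow> step e e' \<Longrightarrow> step (App v e) (App v e')"
| st_beq: "step e e' \<Longrightarrow> step (BEq b a1 a2 e) (BEq b a1 a2 e')"
| st_xeq: "step e e' \<Longrightarrow> step (XEq tx t a1 a2 e) (XEq tx t a1 a2 e')"

abbreviation steps :: "expr \<Rightarrow> expr \<Rightarrow> bool" where
  "steps \<equiv> step\<^sup>*\<^sup>*"

inductive par :: "expr \<Rightarrow> expr \<Rightarrow> bool"
and parT :: "ty \<Rightarrow> ty \<Rightarrow> bool" where
  par_var: "par (Var x) (Var x)"
| par_const: "par (Const c) (Const c)"
| par_lam: "parT t t' \<Longrightarrow> par e e' \<Longrightarrow> par (Lam t e) (Lam t' e')"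
| par_app: "par e1 e1' \<Longrightarrow> par e2 e2' \<Longrightarrow> par (App e1 e2) (App e1' e2')"
| par_beta: "is_value v \<Longrightarrow> par e e' \<Longrightarrow> par v v' \<Longrightarrow> par (App (Lam t e) v) (subst0 e' v')"
| par_eq1: "par (App (Const (CEqB b)) (Const c1)) (Const (CEqC c1 b))"
| par_eq2: "par (App (Const (CEqC c1 b)) (Const c2)) (Const (if c1 = c2 then CTrue else CFalse))"
| par_beq: "par a1 a1' \<Longrightarrow> par a2 a2' \<Longrightarrow> par a3 a3' \<Longrightarrow>
    par (BEq b a1 a2 a3) (BEq b a1' a2' a3')"
| par_xeq: "parT tx tx' \<Longrightarrow> parT t t' \<Longrightarrow> par a1 a1' \<Longrightarrow> par a2 a2' \<Longrightarrow> par a3 a3' \<Longrightarrow>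
    par (XEq tx t a1 a2 a3) (XEq tx' t' a1' a2' a3')"
| parT_ref: "par r r' \<Longrightarrow> parT (TRef b r) (TRef b r')"
| parT_fun: "parT tx tx' \<Longrightarrow> parT t t' \<Longrightarrow> parT (TFun tx t) (TFun tx' t')"
| parT_peq: "parT t t' \<Longrightarrow> par a a' \<Longrightarrow> par c c' \<Longrightarrow> parT (TPEq t a c) (TPEq t' a' c')"

abbreviation pars :: "expr \<Rightarrow> expr \<Rightarrow> bool" where
  "pars \<equiv> par\<^sup>*\<^sup>*"

text \<open>A pending substitution is a list of pairs of closed values; its i-th entry
  is the value pair for de Bruijn index i. Extension delta,(v3,v4)/x is consing.\<close>
type_synonym psubst = "(expr \<times> expr) list"

definition pending_subst :: "psubst \<Rightarrow> bool" where
  "pending_subst \<delta> \<longleftrightarrow>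
     (\<forall>(v1, v2) \<in> set \<delta>. is_value v1 \<and> is_value v2 \<and> closed v1 \<and> closed v2)"

fun close_with :: "expr list \<Rightarrow> expr \<Rightarrow> expr" where
  "close_with [] e = e"
| "close_with (v # vs) e = close_with vs (subst0 e v)"

abbreviation delta1 :: "psubst \<Rightarrow> expr \<Rightarrow> expr" where
  "delta1 \<delta> e \<equiv> close_with (map fst \<delta>) e"
abbreviation delta2 :: "psubst \<Rightarrow> expr \<Rightarrow> expr" where
  "delta2 \<delta> e \<equiv> close_with (map snd \<delta>) e"

fun const_of_bty :: "const \<Rightarrow> bty \<Rightarrow> bool" where
  "const_of_bty CTrue b = (b = BBool)"
| "const_of_bty CFalse b = (b = BBool)"
| "const_of_bty CUnit b = (b = BUnit)"
| "const_of_bty _ _ = False"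

fun val_rel :: "psubst \<Rightarrow> expr \<Rightarrow> expr \<Rightarrow> ty \<Rightarrow> bool" where
  "val_rel \<delta> v1 v2 (TRef b r) =
     (\<exists>c. v1 = Const c \<and> v2 = Const c \<and> const_of_bty c b \<and>
          steps (delta1 \<delta> (subst0 r (Const c))) (Const CTrue) \<and>
          steps (delta2 \<delta> (subst0 r (Const c))) (Const CTrue))"
| "val_rel \<delta> v1 v2 (TFun tx t) =
     (\<forall>v3 v4. is_value v3 \<and> is_value v4 \<and> closed v3 \<and> closed v4 \<and> val_rel \<delta> v3 v4 tx \<longrightarrow>
        (\<exists>w1 w2. steps (App v1 v3) w1 \<and> steps (App v2 v4) w2 \<and>
                 is_value w1 \<and> is_value w2 \<and> val_rel ((v3, v4) # \<delta>) w1 w2 t))"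
| "val_rel \<delta> v1 v2 (TPEq t el er) =
     (\<exists>w1 w2. steps (delta1 \<delta> el) w1 \<and> steps (delta2 \<delta> er) w2 \<and>
              is_value w1 \<and> is_value w2 \<and> val_rel \<delta> w1 w2 t)"

definition exp_rel :: "psubst \<Rightarrow> expr \<Rightarrow> expr \<Rightarrow> ty \<Rightarrow> bool" where
  "exp_rel \<delta> e1 e2 t \<longleftrightarrow>
     (\<exists>v1 v2. steps e1 v1 \<and> steps e2 v2 \<and> is_value v1 \<and> is_value v2 \<and> val_rel \<delta> v1 v2 t)"

end

theory Submission
  imports Defs
begin

text \<open>Parallel reduction can be postponed after evaluation: if \<open>e \<Rrightarrow> e'\<close> and \<open>e'\<close>
  evaluates to a value \<open>v'\<close>, then \<open>e\<close> evaluates to a value \<open>v\<close> with \<open>v \<Rrightarrow> v'\<close>; iterating,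
  the same holds for \<open>\<Rrightarrow>\<^sup>*\<close>. This is proved by well-founded induction on a size bound
  for parallel reduction that decreases when the head \<open>\<beta>\<close>-redex is contracted.
  The value relation is then closed under backward \<open>\<Rrightarrow>\<^sup>*\<close> by induction on the type:
  at refinement types the values are constants, which parallel reduction fixes; at function
  types postponement is applied to the applications \<open>v v\<^sub>3 \<Rrightarrow>\<^sup>* v' v\<^sub>3\<close>; at equality
  types the relation ignores the values.\<close>

section \<open>De Bruijn substitution\<close>

lemma lift_lift:
  shows "i \<le> j \<Longrightarrow> liftE (Suc j) (liftE i e) = liftE i (liftE j e)"
    and "i \<le> j \<Longrightarrow> liftT (Suc j) (liftT i t) = liftT i (liftT j t)"
  by (induction e and t arbitrary: i j and i j) auto

lemma lift_subst_le:
  shows "i \<le> j \<Longrightarrow> liftE i (substE j s e) = substE (Suc j) (liftE i s) (liftE i e)"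
    and "i \<le> j \<Longrightarrow> liftT i (substT j s t) = substT (Suc j) (liftE i s) (liftT i t)"
  by (induction e and t arbitrary: i j s and i j s) (auto simp: lift_lift)

lemma lift_subst_ge:
  shows "j \<le> i \<Longrightarrow> liftE i (substE j s e) = substE j (liftE i s) (liftE (Suc i) e)"
    and "j \<le> i \<Longrightarrow> liftT i (substT j s t) = substT j (liftE i s) (liftT (Suc i) t)"
  by (induction e and t arbitrary: i j s and i j s) (auto simp: lift_lift)

lemma subst_lift:
  shows "substE k s (liftE k e) = e" and "substT k s (liftT k t) = t"
  by (induction e and t arbitrary: k s and k s) auto

lemma subst_subst:
  shows "j \<le> k \<Longrightarrow>
      substE k s (substE j u e) = substE j (substE k s u) (substE (Suc k) (liftE j s) e)"
    and "j \<le> k \<Longrightarrow>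
      substT k s (substT j u t) = substT j (substE k s u) (substT (Suc k) (liftE j s) t)"
  by (induction e and t arbitrary: j k s u and j k s u)
     (auto simp: subst_lift lift_lift lift_subst_le)

fun occsE :: "nat \<Rightarrow> expr \<Rightarrow> nat" and occsT :: "nat \<Rightarrow> ty \<Rightarrow> nat" where
  "occsE k (Const c) = 0"
| "occsE k (Var i) = (if i = k then 1 else 0)"
| "occsE k (App a b) = occsE k a + occsE k b"
| "occsE k (Lam t e) = occsT k t + occsE (Suc k) e"
| "occsE k (BEq b a1 a2 a3) = occsE k a1 + occsE k a2 + occsE k a3"
| "occsE k (XEq tx t a1 a2 a3) =
     occsT k tx + occsT (Suc k) t + occsE k a1 + occsE k a2 + occsE k a3"
| "occsT k (TRef b r) = occsE (Suc k) r"
| "occsT k (TFun tx t) = occsT k tx + occsT (Suc k) t"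
| "occsT k (TPEq t a b) = occsT k t + occsE k a + occsE k b"

lemma occs_lift_below:
  shows "j < k \<Longrightarrow> occsE j (liftE k e) = occsE j e" and "j < k \<Longrightarrow> occsT j (liftT k t) = occsT j t"
  by (induction e and t arbitrary: j k and j k) auto

lemma occs_lift_same:
  shows "occsE k (liftE k e) = 0" and "occsT k (liftT k t) = 0"
  by (induction e and t arbitrary: k and k) auto

lemma occs_lift_above:
  shows "k \<le> j \<Longrightarrow> occsE (Suc j) (liftE k e) = occsE j e"
    and "k \<le> j \<Longrightarrow> occsT (Suc j) (liftT k t) = occsT j t"
  by (induction e and t arbitrary: j k and j k) auto

lemma occs_subst_fresh:
  shows "j \<le> k \<Longrightarrow> occsE j s = 0 \<Longrightarrow> occsE j (substE (Suc k) s e) = occsE j e"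
    and "j \<le> k \<Longrightarrow> occsE j s = 0 \<Longrightarrow> occsT j (substT (Suc k) s t) = occsT j t"
  by (induction e and t arbitrary: j k s and j k s) (auto simp: occs_lift_above)

lemma occs_subst:
  shows "j \<le> k \<Longrightarrow> occsE k (substE j u e) = occsE (Suc k) e + occsE j e * occsE k u"
    and "j \<le> k \<Longrightarrow> occsT k (substT j u t) = occsT (Suc k) t + occsT j t * occsE k u"
  by (induction e and t arbitrary: j k u and j k u) (auto simp: occs_lift_above algebra_simps)

lemma is_value_liftE: "is_value v \<Longrightarrow> is_value (liftE k v)"
  by (induction rule: is_value.induct) (auto intro: is_value.intros)

lemma is_value_substE: "is_value v \<Longrightarrow> is_value (substE k s v)"
  by (induction rule: is_value.induct) (auto intro: is_value.intros)

section \<open>Sized parallel reduction\<close>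

text \<open>The bound of a \<open>\<beta>\<close>-step charges the argument derivation once per occurrence of the
  bound variable, so that contracting the redex (\<open>parN_substE\<close>) yields a strictly smaller
  bound.\<close>

inductive parN :: "nat \<Rightarrow> expr \<Rightarrow> expr \<Rightarrow> bool"
and parTN :: "nat \<Rightarrow> ty \<Rightarrow> ty \<Rightarrow> bool" where
  pn_var: "parN n (Var x) (Var x)"
| pn_const: "parN n (Const c) (Const c)"
| pn_lam: "parTN n1 t t' \<Longrightarrow> parN n2 e e' \<Longrightarrow> n1 + n2 < n \<Longrightarrow> parN n (Lam t e) (Lam t' e')"
| pn_app: "parN n1 e1 e1' \<Longrightarrow> parN n2 e2 e2' \<Longrightarrow> n1 + n2 < n \<Longrightarrow> parN n (App e1 e2) (App e1' e2')"
| pn_beta: "is_value v \<Longrightarrow> parN n1 e e' \<Longrightarrow> parN n2 v v' \<Longrightarrow> n1 + occsE 0 e' * n2 < n \<Longrightarrow>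
    parN n (App (Lam t e) v) (subst0 e' v')"
| pn_eq1: "parN n (App (Const (CEqB b)) (Const c1)) (Const (CEqC c1 b))"
| pn_eq2: "c = (if c1 = c2 then CTrue else CFalse) \<Longrightarrow>
    parN n (App (Const (CEqC c1 b)) (Const c2)) (Const c)"
| pn_beq: "parN n1 a1 a1' \<Longrightarrow> parN n2 a2 a2' \<Longrightarrow> parN n3 a3 a3' \<Longrightarrow> n1 + n2 + n3 < n \<Longrightarrow>
    parN n (BEq b a1 a2 a3) (BEq b a1' a2' a3')"
| pn_xeq: "parTN n1 tx tx' \<Longrightarrow> parTN n2 t t' \<Longrightarrow> parN n3 a1 a1' \<Longrightarrow> parN n4 a2 a2' \<Longrightarrow>
    parN n5 a3 a3' \<Longrightarrow> n1 + n2 + n3 + n4 + n5 < n \<Longrightarrow>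
    parN n (XEq tx t a1 a2 a3) (XEq tx' t' a1' a2' a3')"
| pnT_ref: "parN n1 r r' \<Longrightarrow> n1 < n \<Longrightarrow> parTN n (TRef b r) (TRef b r')"
| pnT_fun: "parTN n1 tx tx' \<Longrightarrow> parTN n2 t t' \<Longrightarrow> n1 + n2 < n \<Longrightarrow> parTN n (TFun tx t) (TFun tx' t')"
| pnT_peq: "parTN n1 t t' \<Longrightarrow> parN n2 a a' \<Longrightarrow> parN n3 c c' \<Longrightarrow> n1 + n2 + n3 < n \<Longrightarrow>
    parTN n (TPEq t a c) (TPEq t' a' c')"

lemma parN_mono: "parN n e e' \<Longrightarrow> n \<le> m \<Longrightarrow> parN m e e'"
  by (erule parN.cases) (auto intro: parN_parTN.intros)

lemma parN_liftE:
  shows "parN n e e' \<Longrightarrow> parN n (liftE k e) (liftE k e')"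
    and "parTN n t t' \<Longrightarrow> parTN n (liftT k t) (liftT k t')"
proof (induction arbitrary: k and k rule: parN_parTN.inducts)
  case (pn_beta v n1 e e' n2 v' n t)
  then have "parN n (App (Lam (liftT k t) (liftE (Suc k) e)) (liftE k v))
     (subst0 (liftE (Suc k) e') (liftE k v'))"
    by (intro parN_parTN.pn_beta) (auto simp: is_value_liftE occs_lift_below)
  then show ?case by (simp add: lift_subst_ge)
qed (auto intro!: parN_parTN.intros)

lemma parN_substE:
  shows "parN n e e' \<Longrightarrow> parN m s s' \<Longrightarrow>
      parN (n + occsE k e' * m) (substE k s e) (substE k s' e')"
    and "parTN n t t' \<Longrightarrow> parN m s s' \<Longrightarrow>
      parTN (n + occsT k t' * m) (substT k s t) (substT k s' t')"
proof (induction arbitrary: k m s s' and k m s s' rule: parN_parTN.inducts)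
  case (pn_var n x)
  then show ?case by (auto intro: parN_parTN.pn_var elim: parN_mono)
next
  case (pn_beta v n1 e e' n2 v' n t)
  have body: "parN (n1 + occsE (Suc k) e' * m)
      (substE (Suc k) (liftE 0 s) e) (substE (Suc k) (liftE 0 s') e')"
    using pn_beta.IH(1) parN_liftE(1)[OF pn_beta.prems] by blast
  have arg: "parN (n2 + occsE k v' * m) (substE k s v) (substE k s' v')"
    using pn_beta.IH(2) pn_beta.prems by blast
  have "occsE 0 (substE (Suc k) (liftE 0 s') e') = occsE 0 e'"
    by (simp add: occs_subst_fresh occs_lift_same)
  moreover have "occsE k (subst0 e' v') = occsE (Suc k) e' + occsE 0 e' * occsE k v'"
    by (simp add: occs_subst)
  ultimately have "parN (n + occsE k (subst0 e' v') * m)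
     (App (Lam (substT k s t) (substE (Suc k) (liftE 0 s) e)) (substE k s v))
     (subst0 (substE (Suc k) (liftE 0 s') e') (substE k s' v'))"
    using pn_beta.hyps(1,4) body arg
    by (intro parN_parTN.pn_beta) (auto simp: is_value_substE algebra_simps)
  then show ?case by (simp add: subst_subst)
next
  case (pn_app n1 e1 e1' n2 e2 e2' n)
  show ?case
    using parN_parTN.pn_app[OF pn_app.IH[OF pn_app.prems]] pn_app.hyps(3)
    by (simp add: add_mult_distrib)
next
  case (pn_lam n1 t t' n2 e e' n)
  note lifted = parN_liftE(1)[OF pn_lam.prems, of 0]
  show ?case
    using parN_parTN.pn_lam[OF pn_lam.IH(1)[OF pn_lam.prems] pn_lam.IH(2)[OF lifted]] pn_lam.hyps(3)
    by (simp add: add_mult_distrib)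
next
  case (pn_beq n1 a1 a1' n2 a2 a2' n3 a3 a3' n b)
  show ?case
    using parN_parTN.pn_beq[OF pn_beq.IH[OF pn_beq.prems]] pn_beq.hyps(4)
    by (simp add: add_mult_distrib)
next
  case (pn_xeq n1 tx tx' n2 t t' n3 a1 a1' n4 a2 a2' n5 a3 a3' n)
  note lifted = parN_liftE(1)[OF pn_xeq.prems, of 0]
  show ?case
    using parN_parTN.pn_xeq[OF pn_xeq.IH(1)[OF pn_xeq.prems] pn_xeq.IH(2)[OF lifted]
        pn_xeq.IH(3-5)[OF pn_xeq.prems]] pn_xeq.hyps(6)
    by (simp add: add_mult_distrib)
next
  case (pnT_ref n1 r r' n b)
  show ?case
    using parN_parTN.pnT_ref[OF pnT_ref.IH[OF parN_liftE(1)[OF pnT_ref.prems]]] pnT_ref.hyps(2)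
    by (simp add: add_mult_distrib)
next
  case (pnT_fun n1 tx tx' n2 t t' n)
  note lifted = parN_liftE(1)[OF pnT_fun.prems, of 0]
  show ?case
    using parN_parTN.pnT_fun[OF pnT_fun.IH(1)[OF pnT_fun.prems] pnT_fun.IH(2)[OF lifted]]
      pnT_fun.hyps(3)
    by (simp add: add_mult_distrib)
next
  case (pnT_peq n1 t t' n2 a a' n3 c c' n)
  show ?case
    using parN_parTN.pnT_peq[OF pnT_peq.IH[OF pnT_peq.prems]] pnT_peq.hyps(4)
    by (simp add: add_mult_distrib)
qed (auto intro: parN_parTN.pn_var parN_parTN.pn_const parN_parTN.pn_eq1 parN_parTN.pn_eq2)

lemma parN_imp_par:
  shows "parN n e e' \<Longrightarrow> par e e'" and "parTN n t t' \<Longrightarrow> parT t t'"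
  by (induction rule: parN_parTN.inducts) (auto intro: par_parT.intros split del: if_split)

lemma par_imp_parN:
  shows "par e e' \<Longrightarrow> \<exists>n. parN n e e'" and "parT t t' \<Longrightarrow> \<exists>n. parTN n t t'"
  by (induction rule: par_parT.inducts) (blast intro: parN_parTN.intros lessI)+

lemma par_subst0: "par e e' \<Longrightarrow> par v v' \<Longrightarrow> par (subst0 e v) (subst0 e' v')"
  by (metis par_imp_parN(1) parN_imp_par(1) parN_substE(1))

lemma par_refl:
  shows "par e e" and "parT t t"
  by (induction e and t) (auto intro: par_parT.intros)

section \<open>Postponing parallel reduction after evaluation\<close>

lemma value_no_step: "is_value v \<Longrightarrow> \<not> step v e"
  by (induction arbitrary: e rule: is_value.induct) (auto elim: step.cases)

lemma par_preserves_value: "is_value v \<Longrightarrow> par v v' \<Longrightarrow> is_value v'"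
  by (induction arbitrary: v' rule: is_value.induct) (auto elim: par.cases intro: is_value.intros)

lemma value_par_Const: "is_value v \<Longrightarrow> par v (Const c) \<Longrightarrow> v = Const c"
  by (auto elim: par.cases is_value.cases)

lemma value_par_Lam: "is_value v \<Longrightarrow> par v (Lam t' b') \<Longrightarrow> \<exists>t b. v = Lam t b \<and> par b b'"
  by (auto elim: par.cases is_value.cases)

lemma steps_App1: "steps e e' \<Longrightarrow> steps (App e e2) (App e' e2)"
  by (induction rule: rtranclp_induct) (auto intro: rtranclp.rtrancl_into_rtrancl step.intros)

lemma steps_App2: "steps e e' \<Longrightarrow> is_value v \<Longrightarrow> steps (App v e) (App v e')"
  by (induction rule: rtranclp_induct) (auto intro: rtranclp.rtrancl_into_rtrancl step.intros)

lemma steps_BEq: "steps e e' \<Longrightarrow> steps (BEq b a1 a2 e) (BEq b a1 a2 e')"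
  by (induction rule: rtranclp_induct) (auto intro: rtranclp.rtrancl_into_rtrancl step.intros)

lemma steps_XEq: "steps e e' \<Longrightarrow> steps (XEq tx t a1 a2 e) (XEq tx t a1 a2 e')"
  by (induction rule: rtranclp_induct) (auto intro: rtranclp.rtrancl_into_rtrancl step.intros)

lemma par_redex_commute:
  assumes "par v1 v1'" "par v2 v2'" "is_value v1" "is_value v2" "is_value v1'" "is_value v2'"
    and "step (App v1' v2') e''"
  shows "\<exists>e0. step (App v1 v2) e0 \<and> par e0 e''"
  using assms(7)
proof (cases rule: step.cases)
  case (st_beta t' b')
  then obtain t b where "v1 = Lam t b" "par b b'"
    using assms(1,3) value_par_Lam by blast
  then show ?thesis
    using st_beta assms(2,4) par_subst0 by (blast intro: step.st_beta)
next
  case (st_eq1 b c1)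
  then show ?thesis
    using assms(1-4) value_par_Const par_refl(1) by (blast intro: step.st_eq1)
next
  case (st_eq2 c1 b c2)
  then show ?thesis
    using assms(1-4) value_par_Const par_refl(1) by (blast intro: step.st_eq2)
qed (use assms(5,6) value_no_step in blast)+

lemma parN_reaches_value:
  "parN n e v' \<Longrightarrow> is_value v' \<Longrightarrow> \<exists>v. steps e v \<and> is_value v \<and> par v v'"
proof (induction n arbitrary: e v' rule: less_induct)
  case (less n)
  have "par e v'" using less.prems(1) parN_imp_par(1) by blast
  from less.prems(1) show ?case
  proof (cases rule: parN.cases)
    case (pn_beta u n1 b b' n2 u' t)
    then have "parN (n1 + occsE 0 b' * n2) (subst0 b u) (subst0 b' u')"
      using parN_substE(1) by fastforce
    then obtain v where "steps (subst0 b u) v" "is_value v" "par v v'"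
      using less.IH pn_beta less.prems(2) by blast
    moreover have "step e (subst0 b u)" using pn_beta by (simp add: step.st_beta)
    ultimately show ?thesis by (blast intro: converse_rtranclp_into_rtranclp)
  next
    case (pn_beq n1 a1 a1' n2 a2 a2' n3 a3 a3' b)
    then have "is_value a3'" using less.prems(2) by (auto elim: is_value.cases)
    then obtain w where "steps a3 w" "is_value w" "par w a3'"
      using less.IH[of n3] pn_beq by auto
    then show ?thesis using pn_beq parN_imp_par steps_BEq
      by (blast intro: is_value.intros par_beq)
  next
    case (pn_xeq n1 tx tx' n2 t t' n3 a1 a1' n4 a2 a2' n5 a3 a3')
    then have "is_value a3'" using less.prems(2) by (auto elim: is_value.cases)
    then obtain w where "steps a3 w" "is_value w" "par w a3'"
      using less.IH[of n5] pn_xeq by auto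
    then show ?thesis using pn_xeq parN_imp_par steps_XEq
      by (blast intro: is_value.intros par_xeq)
  next
    case pn_eq1
    then show ?thesis using par_refl(1) by (blast intro: is_value.intros step.st_eq1)
  next
    case pn_eq2
    then show ?thesis using par_refl(1) by (blast intro: is_value.intros step.st_eq2)
  qed (use less.prems(2) \<open>par e v'\<close> in \<open>auto elim: is_value.cases intro: is_value.intros\<close>)
qed

lemma parN_step_commute:
  "parN n e e' \<Longrightarrow> step e' e'' \<Longrightarrow> \<exists>e0. steps e e0 \<and> par e0 e''"
proof (induction n arbitrary: e e' e'' rule: less_induct)
  case (less n)
  from less.prems(1) show ?case
  proof (cases rule: parN.cases)
    case (pn_beta u n1 b b' n2 u' t)
    then have "parN (n1 + occsE 0 b' * n2) (subst0 b u) (subst0 b' u')"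
      using parN_substE(1) by fastforce
    then obtain e0 where "steps (subst0 b u) e0" "par e0 e''"
      using less.IH pn_beta less.prems(2) by blast
    moreover have "step e (subst0 b u)" using pn_beta by (simp add: step.st_beta)
    ultimately show ?thesis by (blast intro: converse_rtranclp_into_rtranclp)
  next
    case (pn_app n1 e1 e1' n2 e2 e2')
    from less.prems(2) consider
        (left) e1'' where "step e1' e1''" "e'' = App e1'' e2'"
      | (right) e2'' where "is_value e1'" "step e2' e2''" "e'' = App e1' e2''"
      | (redex) "is_value e1'" "is_value e2'"
      unfolding pn_app by (cases rule: step.cases) (auto intro: is_value.intros)
    then show ?thesis
    proof cases
      case left
      then obtain e10 where "steps e1 e10" "par e10 e1''"
        using less.IH[of n1] pn_app by fastforce
      then show ?thesis
        using left pn_app steps_App1 parN_imp_par(1) by (blast intro: par_app)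
    next
      case right
      then obtain v1 where v1: "steps e1 v1" "is_value v1" "par v1 e1'"
        using parN_reaches_value pn_app by blast
      obtain e20 where "steps e2 e20" "par e20 e2''"
        using less.IH[of n2] pn_app right by fastforce
      then have "steps e (App v1 e20)"
        using pn_app v1 steps_App1 steps_App2 by (meson rtranclp_trans)
      then show ?thesis
        using right v1 \<open>par e20 e2''\<close> by (blast intro: par_app)
    next
      case redex
      then obtain v1 v2 where v: "steps e1 v1" "is_value v1" "par v1 e1'"
          "steps e2 v2" "is_value v2" "par v2 e2'"
        using parN_reaches_value pn_app by meson
      then have "steps e (App v1 v2)"
        using pn_app steps_App1 steps_App2 by (meson rtranclp_trans)
      moreover obtain e0 where "step (App v1 v2) e0" "par e0 e''"
        using par_redex_commute v redex less.prems(2) pn_app by blast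
      ultimately show ?thesis by (blast intro: rtranclp.rtrancl_into_rtrancl)
    qed
  next
    case (pn_beq n1 a1 a1' n2 a2 a2' n3 a3 a3' b)
    then obtain a3'' where "step a3' a3''" "e'' = BEq b a1' a2' a3''"
      using less.prems(2) by (auto elim: step.cases)
    moreover obtain e30 where "steps a3 e30" "par e30 a3''"
      using less.IH[of n3] pn_beq calculation by fastforce
    ultimately show ?thesis
      using pn_beq steps_BEq parN_imp_par(1) by (blast intro: par_beq)
  next
    case (pn_xeq n1 tx tx' n2 t t' n3 a1 a1' n4 a2 a2' n5 a3 a3')
    then obtain a3'' where "step a3' a3''" "e'' = XEq tx' t' a1' a2' a3''"
      using less.prems(2) by (auto elim: step.cases)
    moreover obtain e30 where "steps a3 e30" "par e30 a3''"
      using less.IH[of n5] pn_xeq calculation by fastforce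
    ultimately show ?thesis
      using pn_xeq steps_XEq parN_imp_par by (blast intro: par_xeq)
  qed (use less.prems(2) in \<open>auto elim: step.cases\<close>)
qed

lemma par_steps_value_commute:
  "steps e' v' \<Longrightarrow> is_value v' \<Longrightarrow> par e e' \<Longrightarrow> \<exists>v. steps e v \<and> is_value v \<and> par v v'"
proof (induction arbitrary: e rule: converse_rtranclp_induct)
  case base
  then show ?case using par_imp_parN(1) parN_reaches_value by blast
next
  case (step e' e'')
  obtain n where "parN n e e'" using par_imp_parN(1) step.prems(2) by blast
  then obtain e0 where "steps e e0" "par e0 e''" using parN_step_commute step.hyps(1) by blast
  then show ?case using step.IH step.prems(1) by (meson rtranclp_trans)
qed

lemma pars_steps_value_commute:
  assumes "pars e e'" "steps e' v'" "is_value v'"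
  obtains v where "steps e v" "is_value v" "pars v v'"
  using assms
proof (induction arbitrary: v' thesis rule: converse_rtranclp_induct)
  case base
  then show ?case by blast
next
  case (step e e1)
  obtain v1 where "steps e1 v1" "is_value v1" "pars v1 v'" using step.IH step.prems by blast
  moreover obtain v where "steps e v" "is_value v" "par v v1"
    using par_steps_value_commute step.hyps(1) calculation(1,2) by blast
  ultimately show ?case using step.prems(1) by (meson converse_rtranclp_into_rtranclp)
qed

section \<open>The value relation under backward parallel reduction\<close>

lemma value_pars_Const: "pars v (Const c) \<Longrightarrow> is_value v \<Longrightarrow> v = Const c"
  by (induction rule: converse_rtranclp_induct) (use par_preserves_value value_par_Const in blast)+

lemma pars_App1: "pars e e' \<Longrightarrow> pars (App e a) (App e' a)"
  by (induction rule: rtranclp_induct) (auto intro: rtranclp.rtrancl_into_rtrancl par_app par_refl)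

lemma val_rel_pars_backward:
  "val_rel \<delta> v1' v2' \<tau> \<Longrightarrow> pars v1 v1' \<Longrightarrow> pars v2 v2' \<Longrightarrow> is_value v1 \<Longrightarrow> is_value v2
    \<Longrightarrow> val_rel \<delta> v1 v2 \<tau>"
proof (induction \<delta> v1' v2' \<tau> arbitrary: v1 v2 rule: val_rel.induct)
  case (1 \<delta> v1' v2' b r)
  then show ?case using value_pars_Const by auto
next
  case (2 \<delta> v1' v2' tx t)
  show ?case unfolding val_rel.simps
  proof (intro allI impI)
    fix v3 v4
    assume arg: "is_value v3 \<and> is_value v4 \<and> closed v3 \<and> closed v4 \<and> val_rel \<delta> v3 v4 tx"
    then obtain w1 w2 where w: "steps (App v1' v3) w1" "steps (App v2' v4) w2"
        "is_value w1" "is_value w2" "val_rel ((v3, v4) # \<delta>) w1 w2 t"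
      using "2.prems"(1) by (simp only: val_rel.simps) blast
    obtain u1 where u1: "steps (App v1 v3) u1" "is_value u1" "pars u1 w1"
      using pars_steps_value_commute[OF pars_App1[OF "2.prems"(2)] w(1,3)] .
    obtain u2 where u2: "steps (App v2 v4) u2" "is_value u2" "pars u2 w2"
      using pars_steps_value_commute[OF pars_App1[OF "2.prems"(3)] w(2,4)] .
    have "val_rel ((v3, v4) # \<delta>) u1 u2 t"
      using "2.IH" arg w(5) u1(2,3) u2(2,3) by blast
    then show "\<exists>w1 w2. steps (App v1 v3) w1 \<and> steps (App v2 v4) w2 \<and>
        is_value w1 \<and> is_value w2 \<and> val_rel ((v3, v4) # \<delta>) w1 w2 t"
      using u1 u2 by blast
  qed
qed simp

theorem lemmaB20:
  assumes "pending_subst \<delta>"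
    and "pars e1 e1'"
    and "pars e2 e2'"
    and "exp_rel \<delta> e1' e2' \<tau>"
  shows "exp_rel \<delta> e1 e2 \<tau>"
proof -
  obtain v1' v2' where v': "steps e1' v1'" "steps e2' v2'" "is_value v1'" "is_value v2'"
      "val_rel \<delta> v1' v2' \<tau>"
    using assms(4) unfolding exp_rel_def by blast
  obtain v1 where v1: "steps e1 v1" "is_value v1" "pars v1 v1'"
    using pars_steps_value_commute[OF assms(2) v'(1,3)] .
  obtain v2 where v2: "steps e2 v2" "is_value v2" "pars v2 v2'"
    using pars_steps_value_commute[OF assms(3) v'(2,4)] .
  have "val_rel \<delta> v1 v2 \<tau>"
    using val_rel_pars_backward v'(5) v1(2,3) v2(2,3) by blast
  then show ?thesis unfolding exp_rel_def using v1(1,2) v2(1,2) by blast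
qed

end
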